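(* Let $\bar\rho>0$, $\bar\theta>0$, $R>0$, $c_v>0$, $\nu_0>0$, $k_0>0$ be constants, $b=\bar\theta/c_v$, and for $\xi\in\mathbb{R}$ let \[ A(\xi)=\begin{pmatrix}0&\bar\rho i\xi&0\\ \frac{R\bar\theta}{\bar\rho}i\xi&-\nu_0\xi^2&Ri\xi\\ 0&\frac{R\bar\theta}{c_v}i\xi&-k_0\xi^2\end{pmatrix}. \] Then for every $\xi\in\mathbb{R}$ all eigenvalues of $A(\xi)$ have non-positive real part. Moreover there exists $\xi_0=\xi_0(R,\bar\theta,\nu_0,k_0,b)>0$ such that for $|\xi|\ge\xi_0$ one can choose an eigenvalue $-\delta(\xi)$ of $A(\xi)$ satisfying \[ \lim_{|\xi|\to\infty}\delta(\xi)=\omega_0,\qquad \omega_0=\frac{R\bar\theta}{\nu_0}. \]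
   Context: $A(\xi)$ is the Fourier symbol of the adjoint of the one-dimensional compressible non-barotropic Navier–Stokes system linearized around $(\bar\rho,0,\bar\theta)$, with $\nu_0=(\lambda+2\mu)/\bar\rho$ and $k_0=\kappa/(\bar\rho c_v)$. *)

theory Defs
  imports "HOL-Analysis.Analysis" "Jordan_Normal_Form.Char_Poly"
begin

text \<open>Fourier symbol A(xi) of the adjoint linearized 1D compressible
  non-barotropic Navier--Stokes system (3x3 complex matrix).
  Parameters: rho = rho-bar, th = theta-bar, R, cv, nu0, k0.\<close>
definition NS_symbol ::
  "real \<Rightarrow> real \<Rightarrow> real \<Rightarrow> real \<Rightarrow> real \<Rightarrow> real \<Rightarrow> real \<Rightarrow> complex mat" where
  "NS_symbol rho th R cv nu0 k0 \<xi> = mat_of_rows_list 3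
     [ [0, complex_of_real rho * \<i> * complex_of_real \<xi>, 0],
       [complex_of_real (R * th / rho) * \<i> * complex_of_real \<xi>,
        - complex_of_real (nu0 * \<xi>\<^sup>2),
        complex_of_real R * \<i> * complex_of_real \<xi>],
       [0, complex_of_real (R * th / cv) * \<i> * complex_of_real \<xi>,
        - complex_of_real (k0 * \<xi>\<^sup>2)] ]"

end

theory Submission
  imports Defs
begin

text \<open>Write an eigenvector as (x, y, z). The weighted energy
  (R th / rho^2) |x|^2 + |y|^2 + (cv / th) |z|^2 symmetrises the first-order coupling of A(xi),
  so Re mu times this energy equals the dissipation -(nu0 |y|^2 + (cv k0 / th) |z|^2) xi^2 <= 0.
  Conversely, -s is an eigenvalue whenever s is a real root of the characteristic polynomial
  in the variable t = xi^2. For large t its dominant part is k0 nu0 t^2 (s - R th / nu0), while the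
  remaining terms are O(t) for bounded s; the intermediate value theorem then yields a root s
  with |s - R th / nu0| = O(1/t).\<close>

lemma NS_symbol_mult_vec:
  assumes "v \<in> carrier_vec 3"
  shows "NS_symbol rho th R cv nu0 k0 \<xi> *\<^sub>v v = vec 3 (\<lambda>i.
      if i = 0 then complex_of_real rho * \<i> * complex_of_real \<xi> * v$1
      else if i = 1 then complex_of_real (R * th / rho) * \<i> * complex_of_real \<xi> * v$0
        - complex_of_real (nu0 * \<xi>\<^sup>2) * v$1 + complex_of_real R * \<i> * complex_of_real \<xi> * v$2
      else complex_of_real (R * th / cv) * \<i> * complex_of_real \<xi> * v$1
        - complex_of_real (k0 * \<xi>\<^sup>2) * v$2)"
  using assms
  by (intro eq_vecI)
     (auto simp: NS_symbol_def mat_of_rows_list_def scalar_prod_def numeral_3_eq_3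
        numeral_2_eq_2 less_Suc_eq)

lemma dim_row_NS_symbol: "dim_row (NS_symbol rho th R cv nu0 k0 \<xi>) = 3"
  by (simp add: NS_symbol_def mat_of_rows_list_def)

lemma eigenvalue_NS_symbol_iff:
  "eigenvalue (NS_symbol rho th R cv nu0 k0 \<xi>) mu \<longleftrightarrow>
    (\<exists>x y z. (x, y, z) \<noteq> (0, 0, 0)
      \<and> complex_of_real rho * \<i> * complex_of_real \<xi> * y = mu * x
      \<and> complex_of_real (R * th / rho) * \<i> * complex_of_real \<xi> * x
          - complex_of_real (nu0 * \<xi>\<^sup>2) * y + complex_of_real R * \<i> * complex_of_real \<xi> * z = mu * y
      \<and> complex_of_real (R * th / cv) * \<i> * complex_of_real \<xi> * y
          - complex_of_real (k0 * \<xi>\<^sup>2) * z = mu * z)"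
    (is "?eig \<longleftrightarrow> (\<exists>x y z. ?eqs x y z)")
proof
  assume ?eig
  then obtain v where v: "v \<in> carrier_vec 3" "v \<noteq> 0\<^sub>v 3"
      "NS_symbol rho th R cv nu0 k0 \<xi> *\<^sub>v v = mu \<cdot>\<^sub>v v"
    unfolding eigenvalue_def eigenvector_def dim_row_NS_symbol by blast
  have nz: "(v$0, v$1, v$2) \<noteq> (0, 0, 0)"
  proof
    assume "(v$0, v$1, v$2) = (0, 0, 0)"
    then have "v = 0\<^sub>v 3"
      using v(1) by (intro eq_vecI) (auto simp: numeral_3_eq_3 numeral_2_eq_2 less_Suc_eq)
    with v(2) show False by simp
  qed
  have "(NS_symbol rho th R cv nu0 k0 \<xi> *\<^sub>v v) $ i = (mu \<cdot>\<^sub>v v) $ i" if "i < 3" for i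
    using v(3) by simp
  note rows = this[unfolded NS_symbol_mult_vec[OF v(1)]]
  have "?eqs (v$0) (v$1) (v$2)"
    using nz rows[of 0] rows[of 1] rows[of 2] v(1) by (auto simp: mult.commute)
  then show "\<exists>x y z. ?eqs x y z" by blast
next
  assume "\<exists>x y z. ?eqs x y z"
  then obtain x y z where eqs: "?eqs x y z" by blast
  define v where "v = vec 3 (\<lambda>i. if i = 0 then x else if i = 1 then y else z)"
  have v: "v \<in> carrier_vec 3" by (simp add: v_def)
  have "v \<noteq> 0\<^sub>v 3"
  proof
    assume "v = 0\<^sub>v 3"
    then have "v$0 = 0" "v$1 = 0" "v$2 = 0" by auto
    with eqs show False by (simp add: v_def)
  qed
  moreover have "NS_symbol rho th R cv nu0 k0 \<xi> *\<^sub>v v = mu \<cdot>\<^sub>v v"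
    unfolding NS_symbol_mult_vec[OF v] using eqs by (intro eq_vecI) (auto simp: v_def mult.commute)
  ultimately show ?eig
    unfolding eigenvalue_def eigenvector_def dim_row_NS_symbol using v by blast
qed

lemma NS_symbol_eigenvalue_Re_nonpos:
  fixes rho th R cv nu0 k0 \<xi> :: real
  assumes pos: "rho > 0" "th > 0" "R > 0" "cv > 0" "nu0 > 0" "k0 > 0"
    and "eigenvalue (NS_symbol rho th R cv nu0 k0 \<xi>) mu"
  shows "Re mu \<le> 0"
proof -
  obtain x y z where nz: "(x, y, z) \<noteq> (0, 0, 0)"
    and e1: "complex_of_real rho * \<i> * complex_of_real \<xi> * y = mu * x"
    and e2: "complex_of_real (R * th / rho) * \<i> * complex_of_real \<xi> * x
        - complex_of_real (nu0 * \<xi>\<^sup>2) * y + complex_of_real R * \<i> * complex_of_real \<xi> * z = mu * y"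
    and e3: "complex_of_real (R * th / cv) * \<i> * complex_of_real \<xi> * y
        - complex_of_real (k0 * \<xi>\<^sup>2) * z = mu * z"
    using assms(7) unfolding eigenvalue_NS_symbol_iff by blast
  define w1 where "w1 = R * th / rho^2"
  define w3 where "w3 = cv / th"
  define E where "E = w1 * (cmod x)^2 + (cmod y)^2 + w3 * (cmod z)^2"
  have w1: "w1 > 0" and w3: "w3 > 0" using pos by (auto simp: w1_def w3_def)
  have Re_quadratic: "Re (cnj u * (mu * u)) = Re mu * (cmod u)^2" for u
    by (simp add: cmod_power2) (simp add: algebra_simps power2_eq_square)
  have "Re mu * E = w1 * Re (cnj x * (mu * x)) + Re (cnj y * (mu * y)) + w3 * Re (cnj z * (mu * z))"
    unfolding E_def Re_quadratic by (simp add: algebra_simps)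
  also have "\<dots> = - (nu0 * \<xi>^2 * (cmod y)^2 + w3 * k0 * \<xi>^2 * (cmod z)^2)"
    unfolding e1[symmetric] e2[symmetric] e3[symmetric] using pos
    by (simp add: cmod_power2) (simp add: w1_def w3_def field_simps power2_eq_square)
  also have "\<dots> \<le> 0"
    using pos w3 by (intro neg_le_0_iff_le[THEN iffD2] add_nonneg_nonneg mult_nonneg_nonneg) auto
  finally have "Re mu * E \<le> 0" .
  moreover have "E > 0"
  proof -
    have "0 \<le> w1 * (cmod x)^2" "0 \<le> (cmod y)^2" "0 \<le> w3 * (cmod z)^2"
      using w1 w3 by simp_all
    moreover have "x \<noteq> 0 \<Longrightarrow> 0 < w1 * (cmod x)^2" "y \<noteq> 0 \<Longrightarrow> 0 < (cmod y)^2"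
      "z \<noteq> 0 \<Longrightarrow> 0 < w3 * (cmod z)^2"
      using w1 w3 by simp_all
    ultimately show ?thesis using nz unfolding E_def by fastforce
  qed
  ultimately show ?thesis by (simp add: mult_le_0_iff)
qed

text \<open>-det(-s I - A(xi)) with t = xi^2, i.e. the characteristic polynomial at the eigenvalue -s.\<close>
definition NS_dispersion :: "real \<Rightarrow> real \<Rightarrow> real \<Rightarrow> real \<Rightarrow> real \<Rightarrow> real \<Rightarrow> real \<Rightarrow> real" where
  "NS_dispersion th R cv nu0 k0 t s =
     s^3 - (nu0 + k0) * t * s^2 + (nu0 * k0 * t^2 + (R^2 * th / cv + R * th) * t) * s
     - R * th * k0 * t^2"

lemma NS_symbol_eigenvalue_of_dispersion_root:
  fixes rho th R cv nu0 k0 \<xi> s :: real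
  assumes "rho \<noteq> 0" "cv \<noteq> 0" "s \<noteq> 0" "s \<noteq> k0 * \<xi>^2"
    and root: "NS_dispersion th R cv nu0 k0 (\<xi>^2) s = 0"
  shows "eigenvalue (NS_symbol rho th R cv nu0 k0 \<xi>) (- complex_of_real s)"
proof -
  define mu where "mu = - complex_of_real s"
  \<comment> \<open>solves the first and third rows for every s; the second row is then the dispersion relation\<close>
  define x where "x = complex_of_real rho * \<i> * complex_of_real \<xi> * (mu + complex_of_real (k0 * \<xi>^2))"
  define y where "y = mu * (mu + complex_of_real (k0 * \<xi>^2))"
  define z where "z = complex_of_real (R * th / cv) * \<i> * complex_of_real \<xi> * mu"
  have "y = - complex_of_real (s * (k0 * \<xi>^2 - s))"
    by (simp add: y_def mu_def algebra_simps)
  then have "(x, y, z) \<noteq> (0, 0, 0)"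
    using assms(3,4) by (simp only: prod.inject neg_equal_0_iff_equal of_real_eq_0_iff) simp
  moreover have "complex_of_real rho * \<i> * complex_of_real \<xi> * y = mu * x"
    by (simp add: x_def y_def algebra_simps)
  moreover have "complex_of_real (R * th / rho) * \<i> * complex_of_real \<xi> * x
      - complex_of_real (nu0 * \<xi>\<^sup>2) * y + complex_of_real R * \<i> * complex_of_real \<xi> * z - mu * y
      = complex_of_real (NS_dispersion th R cv nu0 k0 (\<xi>^2) s)"
    using assms(1,2) by (simp add: NS_dispersion_def x_def y_def z_def mu_def complex_eq_iff
        field_simps power2_eq_square power3_eq_cube)
  then have "complex_of_real (R * th / rho) * \<i> * complex_of_real \<xi> * x
      - complex_of_real (nu0 * \<xi>\<^sup>2) * y + complex_of_real R * \<i> * complex_of_real \<xi> * z = mu * y"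
    unfolding root by simp
  moreover have "complex_of_real (R * th / cv) * \<i> * complex_of_real \<xi> * y
      - complex_of_real (k0 * \<xi>\<^sup>2) * z = mu * z"
    by (simp add: z_def y_def algebra_simps)
  ultimately show ?thesis
    unfolding eigenvalue_NS_symbol_iff mu_def[symmetric] by blast
qed

lemma cubic_remainder_bound:
  fixes a P t s M :: real
  assumes "1 \<le> t" "0 \<le> s" "s \<le> M" "0 \<le> a" "0 \<le> P"
  shows "\<bar>s^3 - a * t * s^2 + P * t * s\<bar> \<le> (M^3 + a * M^2 + P * M) * t"
proof -
  have "s^3 \<le> M^3"
    using assms by (simp add: power_mono)
  also have "\<dots> \<le> M^3 * t"
    using assms by (simp add: mult_le_cancel_left1)
  finally have "s^3 \<le> M^3 * t" .
  moreover have "a * t * s^2 \<le> a * M^2 * t"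
    using assms power_mono[of s M 2] mult_left_mono[of "s^2" "M^2" "a * t"] by (simp add: algebra_simps)
  moreover have "P * t * s \<le> P * M * t"
    using assms mult_left_mono[of s M "P * t"] by (simp add: algebra_simps)
  moreover have "0 \<le> s^3" "0 \<le> a * t * s^2" "0 \<le> P * t * s"
    using assms by simp_all
  ultimately show ?thesis
    unfolding abs_le_iff distrib_right by linarith
qed

lemma NS_dispersion_remainder_bound:
  fixes th R cv nu0 k0 t s M :: real
  assumes "th > 0" "R > 0" "cv > 0" "nu0 > 0" "k0 > 0" "1 \<le> t" "0 \<le> s" "s \<le> M"
  shows "\<bar>NS_dispersion th R cv nu0 k0 t s - k0 * nu0 * t^2 * (s - R * th / nu0)\<bar>
    \<le> (M^3 + (nu0 + k0) * M^2 + (R^2 * th / cv + R * th) * M) * t"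
proof -
  have "NS_dispersion th R cv nu0 k0 t s - k0 * nu0 * t^2 * (s - R * th / nu0)
      = s^3 - (nu0 + k0) * t * s^2 + (R^2 * th / cv + R * th) * t * s"
    using assms by (simp add: NS_dispersion_def field_simps power2_eq_square)
  then show ?thesis
    using assms by (simp add: cubic_remainder_bound)
qed

lemma root_near_of_dominant_linear_term:
  fixes F :: "real \<Rightarrow> real" and a b w :: real
  assumes "a > 0" "w > 0" "2 * b \<le> a * w"
    and "continuous_on {w/2..2*w} F"
    and remainder: "\<And>s. w/2 \<le> s \<Longrightarrow> s \<le> 2*w \<Longrightarrow> \<bar>F s - a * (s - w)\<bar> \<le> b"
  shows "\<exists>s. w/2 \<le> s \<and> s \<le> 2*w \<and> F s = 0 \<and> \<bar>s - w\<bar> \<le> b / a"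
proof -
  have "\<bar>F (w/2) + a * w / 2\<bar> \<le> b" "\<bar>F (2*w) - a * w\<bar> \<le> b"
    using remainder[of "w/2"] remainder[of "2*w"] assms(2) by (simp_all add: algebra_simps)
  moreover have "0 < a * w" using assms(1,2) by simp
  ultimately have "F (w/2) \<le> 0" "0 \<le> F (2*w)"
    using assms(3) by (simp_all add: abs_le_iff)
  then obtain s where s: "w/2 \<le> s" "s \<le> 2*w" and root: "F s = 0"
    using IVT'[of F "w/2" 0 "2*w"] assms(2,4) by auto
  have "\<bar>s - w\<bar> * a \<le> b"
    using remainder[OF s] root assms(1) by (simp add: abs_mult mult.commute)
  then have "\<bar>s - w\<bar> \<le> b / a"
    using assms(1) by (simp add: pos_le_divide_eq)
  with s root show ?thesis by blast
qed

lemma NS_dispersion_root_near_limit: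
  fixes th R cv nu0 k0 t w K :: real
  assumes pos: "th > 0" "R > 0" "cv > 0" "nu0 > 0" "k0 > 0"
    and w_def: "w = R * th / nu0"
    and K_def: "K = (2*w)^3 + (nu0 + k0) * (2*w)^2 + (R^2 * th / cv + R * th) * (2*w)"
    and t: "1 \<le> t" "2 * K \<le> k0 * nu0 * t * w"
  shows "\<exists>s. w/2 \<le> s \<and> s \<le> 2*w \<and> NS_dispersion th R cv nu0 k0 t s = 0
    \<and> \<bar>s - w\<bar> \<le> K / (k0 * nu0 * t)"
proof -
  have "k0 * nu0 * t^2 > 0" and w: "w > 0" using pos t(1) by (simp_all add: w_def)
  moreover have "2 * (K * t) \<le> k0 * nu0 * t^2 * w"
    using t mult_right_mono[OF t(2), of t] by (simp add: power2_eq_square mult_ac)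
  moreover have "continuous_on {w/2..2*w} (NS_dispersion th R cv nu0 k0 t)"
    unfolding NS_dispersion_def[abs_def] by (intro continuous_intros)
  moreover have "\<bar>NS_dispersion th R cv nu0 k0 t s - k0 * nu0 * t^2 * (s - w)\<bar> \<le> K * t"
    if "w/2 \<le> s" "s \<le> 2*w" for s
  proof -
    have "0 \<le> s" using that w by simp
    from NS_dispersion_remainder_bound[OF pos t(1) this that(2)]
    show ?thesis unfolding K_def w_def by assumption
  qed
  ultimately have "\<exists>s. w/2 \<le> s \<and> s \<le> 2*w \<and> NS_dispersion th R cv nu0 k0 t s = 0
      \<and> \<bar>s - w\<bar> \<le> K * t / (k0 * nu0 * t^2)"
    by (rule root_near_of_dominant_linear_term)
  moreover have "K * t / (k0 * nu0 * t^2) = K / (k0 * nu0 * t)"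
    using t(1) by (simp add: power2_eq_square)
  ultimately show ?thesis by simp
qed

lemma NS_symbol_eigenvalue_near_limit:
  fixes rho th R cv nu0 k0 :: real
  assumes pos: "rho > 0" "th > 0" "R > 0" "cv > 0" "nu0 > 0" "k0 > 0"
  shows "\<exists>\<xi>0 > 0. \<exists>C. \<forall>\<xi>. \<xi>0 \<le> \<bar>\<xi>\<bar> \<longrightarrow> (\<exists>s.
    eigenvalue (NS_symbol rho th R cv nu0 k0 \<xi>) (- complex_of_real s) \<and> \<bar>s - R * th / nu0\<bar> \<le> C / \<xi>^2)"
proof -
  define w where "w = R * th / nu0"
  define K where "K = (2*w)^3 + (nu0 + k0) * (2*w)^2 + (R^2 * th / cv + R * th) * (2*w)"
  define \<xi>0 where "\<xi>0 = max 1 (max (2 * K / (k0 * nu0 * w)) (4 * w / k0))"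
  have w: "w > 0" and c: "k0 * nu0 * w > 0" using pos by (simp_all add: w_def)
  have "\<exists>s. eigenvalue (NS_symbol rho th R cv nu0 k0 \<xi>) (- complex_of_real s)
      \<and> \<bar>s - w\<bar> \<le> K / (k0 * nu0) / \<xi>^2" if "\<xi>0 \<le> \<bar>\<xi>\<bar>" for \<xi>
  proof -
    have "\<bar>\<xi>\<bar> \<le> \<xi>^2"
      using that mult_left_mono[of 1 "\<bar>\<xi>\<bar>" "\<bar>\<xi>\<bar>"] by (simp add: \<xi>0_def power2_eq_square)
    with that have "\<xi>0 \<le> \<xi>^2" by linarith
    then have t: "1 \<le> \<xi>^2" "2 * K / (k0 * nu0 * w) \<le> \<xi>^2" "4 * w / k0 \<le> \<xi>^2"
      by (simp_all add: \<xi>0_def)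
    have "2 * K \<le> \<xi>^2 * (k0 * nu0 * w)"
      using t(2) pos_divide_le_eq[OF c] by simp
    then have "2 * K \<le> k0 * nu0 * \<xi>^2 * w"
      by (simp add: mult_ac)
    from NS_dispersion_root_near_limit[OF pos(2-6) w_def K_def t(1) this]
    obtain s where s: "w/2 \<le> s" "s \<le> 2*w" and root: "NS_dispersion th R cv nu0 k0 (\<xi>^2) s = 0"
      and "\<bar>s - w\<bar> \<le> K / (k0 * nu0 * \<xi>^2)"
      by blast
    then have close: "\<bar>s - w\<bar> \<le> K / (k0 * nu0) / \<xi>^2"
      by simp
    have "4 * w \<le> k0 * \<xi>^2"
      using t(3) pos_divide_le_eq[of k0 "4 * w" "\<xi>^2"] pos(6) by (simp add: mult.commute)
    then have "s \<noteq> 0" "s \<noteq> k0 * \<xi>^2"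
      using s w by linarith+
    with root pos have "eigenvalue (NS_symbol rho th R cv nu0 k0 \<xi>) (- complex_of_real s)"
      by (intro NS_symbol_eigenvalue_of_dispersion_root) auto
    with close show ?thesis by blast
  qed
  then have "\<forall>\<xi>. \<xi>0 \<le> \<bar>\<xi>\<bar> \<longrightarrow> (\<exists>s. eigenvalue (NS_symbol rho th R cv nu0 k0 \<xi>) (- complex_of_real s)
      \<and> \<bar>s - R * th / nu0\<bar> \<le> K / (k0 * nu0) / \<xi>^2)"
    unfolding w_def by blast
  moreover have "\<xi>0 > 0" by (simp add: \<xi>0_def)
  ultimately show ?thesis by blast
qed

lemma tendsto_at_infinity_of_inverse_square_bound:
  fixes f :: "real \<Rightarrow> 'a::real_normed_vector"
  assumes "\<And>x. b \<le> \<bar>x\<bar> \<Longrightarrow> norm (f x - l) \<le> C / x^2"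
  shows "(f \<longlongrightarrow> l) at_infinity"
proof -
  have "\<forall>\<^sub>F x in at_infinity. norm (f x - l) \<le> C / x^2"
    unfolding eventually_at_infinity real_norm_def using assms by blast
  moreover have "((\<lambda>x::real. C / x^2) \<longlongrightarrow> 0) at_infinity"
    by (rule tendsto_divide_0[OF tendsto_const Polynomial.filterlim_power_at_infinity]) simp
  ultimately have "((\<lambda>x. f x - l) \<longlongrightarrow> 0) at_infinity"
    by (rule Lim_null_comparison)
  then show ?thesis
    by (rule LIM_zero_cancel)
qed

theorem lemma2p5:
  fixes rho th R cv nu0 k0 :: real
  assumes "rho > 0" "th > 0" "R > 0" "cv > 0" "nu0 > 0" "k0 > 0"
  shows "(\<forall>\<xi> :: real. \<forall>mu. eigenvalue (NS_symbol rho th R cv nu0 k0 \<xi>) mu \<longrightarrow> Re mu \<le> 0)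
       \<and> (\<exists>\<xi>0 > 0. \<exists>\<delta> :: real \<Rightarrow> complex.
            (\<forall>\<xi>. \<bar>\<xi>\<bar> \<ge> \<xi>0 \<longrightarrow> eigenvalue (NS_symbol rho th R cv nu0 k0 \<xi>) (- \<delta> \<xi>))
          \<and> (\<delta> \<longlongrightarrow> complex_of_real (R * th / nu0)) at_infinity)"
proof (intro conjI allI impI)
  show "Re mu \<le> 0" if "eigenvalue (NS_symbol rho th R cv nu0 k0 \<xi>) mu" for \<xi> mu
    using NS_symbol_eigenvalue_Re_nonpos[OF assms that] .
  obtain \<xi>0 C where "\<xi>0 > 0" and near: "\<And>\<xi>. \<xi>0 \<le> \<bar>\<xi>\<bar> \<Longrightarrow> \<exists>s.
      eigenvalue (NS_symbol rho th R cv nu0 k0 \<xi>) (- complex_of_real s) \<and> \<bar>s - R * th / nu0\<bar> \<le> C / \<xi>^2"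
    using NS_symbol_eigenvalue_near_limit[OF assms] by blast
  define \<delta> where "\<delta> \<xi> = complex_of_real (SOME s.
      eigenvalue (NS_symbol rho th R cv nu0 k0 \<xi>) (- complex_of_real s) \<and> \<bar>s - R * th / nu0\<bar> \<le> C / \<xi>^2)"
    for \<xi>
  have \<delta>: "eigenvalue (NS_symbol rho th R cv nu0 k0 \<xi>) (- \<delta> \<xi>)
      \<and> norm (\<delta> \<xi> - complex_of_real (R * th / nu0)) \<le> C / \<xi>^2" if "\<xi>0 \<le> \<bar>\<xi>\<bar>" for \<xi>
    unfolding \<delta>_def of_real_diff[symmetric] norm_of_real by (rule someI_ex[OF near[OF that]])
  have "(\<delta> \<longlongrightarrow> complex_of_real (R * th / nu0)) at_infinity"
    by (rule tendsto_at_infinity_of_inverse_square_bound[of \<xi>0]) (use \<delta> in blast)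
  with \<open>\<xi>0 > 0\<close> \<delta> show "\<exists>\<xi>0 > 0. \<exists>\<delta> :: real \<Rightarrow> complex.
      (\<forall>\<xi>. \<bar>\<xi>\<bar> \<ge> \<xi>0 \<longrightarrow> eigenvalue (NS_symbol rho th R cv nu0 k0 \<xi>) (- \<delta> \<xi>))
      \<and> (\<delta> \<longlongrightarrow> complex_of_real (R * th / nu0)) at_infinity"
    by blast
qed

end
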